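(* Let $m\ge5$ be an odd integer and $h\ge1$ an integer, and set $n'=2^{m+h-2}-2^{m-2}-2^{\frac{m-1}{2}}$. Let $\mathbf{C}_0$ be a projective binary linear $[2^{m-2},m-1,2^{m-3}-2^{\frac{m-3}{2}}]_2$ code with maximum weight $2^{m-3}+2^{\frac{m-3}{2}}$, and let $\mathbf{C}_1$ be its simplex complementary code of dimension $m+h-1$, a $[2^{m+h-1}-2^{m-2}-1,\ m+h-1,\ 2^{m+h-2}-2^{m-3}-2^{\frac{m-3}{2}}]_2$ code with maximum weight $2^{m+h-2}$. Then the code $\mathbf{C}'$ obtained from $\mathbf{C}_1$ by the extension construction is a minimal binary linear $[2^{m+h-1}-2^{m-2}-1+n',\ m+h-1,\ 2^{m+h-2}-2^{m-3}-2^{\frac{m-3}{2}}]_2$ code with maximum weight $2^{m+h-1}-2^{m-2}-2^{\frac{m-1}{2}}$ (that is, $2^{m+h-2}+n'$), and it violates the Ashikhmin–Barg condition.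
   Context: Projective code: columns of a generator matrix are nonzero and pairwise distinct (binary case). Simplex complementary code of dimension $K=k+h$ of a projective binary $[n,k]$ code: append $h$ zeros to the columns of a generator matrix and take the code generated by the matrix whose columns are all nonzero vectors of $\mathbf{F}_2^K$ other than these $n$. Extension construction for a binary $[N,K]$ code $\mathbf{D}$, $K\ge2$, with minimum nonzero weight $w_{min}$, maximum weight $w_{max}$ and $n'=2w_{min}-w_{max}\ge1$: choose a basis $\mathbf{r}_1,\dots,\mathbf{r}_K$ with $wt(\mathbf{r}_1)=w_{max}$, $wt(\mathbf{r}_2)=w_{min}$; the extended code is generated by $(\mathbf{1},\mathbf{r}_1),(\mathbf{0},\mathbf{r}_2),\dots,(\mathbf{0},\mathbf{r}_K)$ in $\mathbf{F}_2^{n'+N}$. Minimal code: nonzero codewords with nested supports are equal. Ashikhmin–Barg condition (binary): $w_{min}/w_{max}>1/2$. *)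

theory Defs
  imports Complex_Main
begin

text \<open>Binary vectors of length N are functions nat \<Rightarrow> bool vanishing from index N on;
  True stands for 1 in F_2. Matrices are functions G i j (row i, column j).\<close>

type_synonym bvec = "nat \<Rightarrow> bool"

definition zvec :: bvec where "zvec = (\<lambda>_. False)"

definition vec_space :: "nat \<Rightarrow> bvec set" where
  "vec_space N = {v. \<forall>i\<ge>N. \<not> v i}"

definition vadd :: "bvec \<Rightarrow> bvec \<Rightarrow> bvec" where
  "vadd u v = (\<lambda>i. u i \<noteq> v i)"

definition supp :: "bvec \<Rightarrow> nat set" where "supp v = {i. v i}"

definition wt :: "bvec \<Rightarrow> nat" where "wt v = card (supp v)"

definition vsum :: "(nat \<Rightarrow> bvec) \<Rightarrow> nat set \<Rightarrow> bvec" where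
  "vsum f A = (\<lambda>j. odd (card {i\<in>A. f i j}))"

definition lin_code :: "nat \<Rightarrow> bvec set \<Rightarrow> bool" where
  "lin_code N C \<longleftrightarrow> C \<subseteq> vec_space N \<and> zvec \<in> C \<and> (\<forall>u\<in>C. \<forall>v\<in>C. vadd u v \<in> C)"

definition wmin :: "bvec set \<Rightarrow> nat" where "wmin C = Min (wt ` (C - {zvec}))"
definition wmax :: "bvec set \<Rightarrow> nat" where "wmax C = Max (wt ` C)"

definition is_code :: "nat \<Rightarrow> nat \<Rightarrow> nat \<Rightarrow> bvec set \<Rightarrow> bool" where
  "is_code N k d C \<longleftrightarrow> lin_code N C \<and> card C = 2 ^ k \<and> wmin C = d"

definition mrow :: "nat \<Rightarrow> (nat \<Rightarrow> nat \<Rightarrow> bool) \<Rightarrow> nat \<Rightarrow> bvec" where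
  "mrow N G i = (\<lambda>j. j < N \<and> G i j)"

definition mcol :: "nat \<Rightarrow> (nat \<Rightarrow> nat \<Rightarrow> bool) \<Rightarrow> nat \<Rightarrow> bvec" where
  "mcol k G j = (\<lambda>i. i < k \<and> G i j)"

definition span_vecs :: "nat \<Rightarrow> (nat \<Rightarrow> bvec) \<Rightarrow> bvec set" where
  "span_vecs k f = {vsum f A | A. A \<subseteq> {..<k}}"

definition lin_indep :: "nat \<Rightarrow> (nat \<Rightarrow> bvec) \<Rightarrow> bool" where
  "lin_indep k f \<longleftrightarrow> (\<forall>A \<subseteq> {..<k}. vsum f A = zvec \<longrightarrow> A = {})"

definition code_of :: "nat \<Rightarrow> nat \<Rightarrow> (nat \<Rightarrow> nat \<Rightarrow> bool) \<Rightarrow> bvec set" where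
  "code_of k N G = span_vecs k (mrow N G)"

definition is_gen_matrix :: "nat \<Rightarrow> nat \<Rightarrow> (nat \<Rightarrow> nat \<Rightarrow> bool) \<Rightarrow> bvec set \<Rightarrow> bool" where
  "is_gen_matrix k N G C \<longleftrightarrow> lin_indep k (mrow N G) \<and> code_of k N G = C"

definition projective :: "nat \<Rightarrow> nat \<Rightarrow> bvec set \<Rightarrow> bool" where
  "projective N k C \<longleftrightarrow> (\<exists>G. is_gen_matrix k N G C \<and>
     (\<forall>j<N. mcol k G j \<noteq> zvec) \<and> inj_on (mcol k G) {..<N})"

text \<open>H (K x N1, K = k + h) is a generator matrix of the simplex complementary code of the
  code with k x n generator matrix G: its columns are exactly (once each) the nonzero vectors of
  F_2^K other than the columns of G padded with h zeros (padding is automatic in this encoding).\<close>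
definition simplex_compl_matrix ::
  "nat \<Rightarrow> nat \<Rightarrow> (nat \<Rightarrow> nat \<Rightarrow> bool) \<Rightarrow> nat \<Rightarrow> nat \<Rightarrow> (nat \<Rightarrow> nat \<Rightarrow> bool) \<Rightarrow> bool" where
  "simplex_compl_matrix k n G h N1 H \<longleftrightarrow>
     bij_betw (mcol (k + h) H) {..<N1}
       ((vec_space (k + h) - {zvec}) - mcol k G ` {..<n})"

text \<open>Basis r 0, ..., r (K-1) of the code D (r 0 = r_1, r 1 = r_2 in the paper).\<close>
definition is_basis :: "nat \<Rightarrow> (nat \<Rightarrow> bvec) \<Rightarrow> bvec set \<Rightarrow> bool" where
  "is_basis K r D \<longleftrightarrow> lin_indep K r \<and> span_vecs K r = D"

definition ext_len :: "bvec set \<Rightarrow> nat" where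
  "ext_len D = 2 * wmin D - wmax D"

text \<open>Extension construction: code of length n' + N generated by (1, r_1), (0, r_2), ..., (0, r_K).\<close>
definition extension_code :: "bvec set \<Rightarrow> nat \<Rightarrow> (nat \<Rightarrow> bvec) \<Rightarrow> bvec set" where
  "extension_code D K r = span_vecs K
     (\<lambda>i. \<lambda>j. if j < ext_len D then i = 0 else r i (j - ext_len D))"

definition minimal_code :: "bvec set \<Rightarrow> bool" where
  "minimal_code C \<longleftrightarrow> (\<forall>u\<in>C - {zvec}. \<forall>v\<in>C - {zvec}. supp u \<subseteq> supp v \<longrightarrow> u = v)"

definition ashikhmin_barg :: "bvec set \<Rightarrow> bool" where
  "ashikhmin_barg C \<longleftrightarrow> real (wmin C) / real (wmax C) > 1 / 2"

end

theory Submission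
  imports Defs
begin

text \<open>
  For a nonzero message A \<subseteq> {..<K}, the weight of the codeword of the simplex complementary
  code C1 is the number of columns of H with odd inner product with A. These columns are the
  nonzero vectors of F_2^K other than the columns of G, and exactly half of F_2^K has odd inner
  product with A; so the weight is 2^(K-1) minus the weight of the codeword of C0 with message
  A \<inter> {..<k}. Hence wmax C1 = 2^(K-1) and wmin C1 = 2^(K-1) - wmax C0, and
  2 wmax C0 < 2^(K-1) gives wmax C1 < 2 wmin C1.

  The extension construction prepends n' = 2 wmin - wmax coordinates, equal to 1 exactly on the
  codewords whose message contains r_1. The minimum weight, attained by r_2, does not change,
  while the maximum weight becomes n' + wmax = 2 wmin, so the Ashikhmin-Barg condition fails.
  Minimality survives: nested supports in C' give nested supports in C1, which is minimal by the
  Ashikhmin-Barg condition, and the basis is independent.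
\<close>

section \<open>Linear algebra over F_2\<close>

lemma odd_card_sym_diff:
  assumes "finite X" "finite Y"
  shows "odd (card (sym_diff X Y)) \<longleftrightarrow> odd (card X) \<noteq> odd (card Y)"
proof -
  have "card (sym_diff X Y) = card (X - Y) + card (Y - X)"
    using assms by (intro card_Un_disjoint) auto
  moreover have "card X = card (X \<inter> Y) + card (X - Y)" "card Y = card (X \<inter> Y) + card (Y - X)"
    using assms card_Int_Diff[of X Y] card_Int_Diff[of Y X] by (auto simp: Int_commute)
  ultimately show ?thesis by auto
qed

lemma vsum_sym_diff:
  assumes "finite A" "finite B"
  shows "vsum f (sym_diff A B) = vadd (vsum f A) (vsum f B)"
proof
  fix j
  have "{i \<in> sym_diff A B. f i j} =
      ({i\<in>A. f i j} - {i\<in>B. f i j}) \<union> ({i\<in>B. f i j} - {i\<in>A. f i j})"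
    by blast
  then show "vsum f (sym_diff A B) j = vadd (vsum f A) (vsum f B) j"
    using assms by (simp add: vsum_def vadd_def odd_card_sym_diff)
qed

lemma vsum_empty [simp]: "vsum f {} = zvec"
  by (simp add: vsum_def zvec_def)

lemma vsum_singleton [simp]: "vsum f {i} = f i"
proof
  fix j
  have "{i'\<in>{i}. f i' j} = (if f i j then {i} else {})"
    by auto
  then show "vsum f {i} j = f i j"
    by (simp add: vsum_def)
qed

lemma vadd_eq_zvec_iff: "vadd u v = zvec \<longleftrightarrow> u = v"
  by (auto simp: vadd_def zvec_def fun_eq_iff)

lemma not_vsum_if_none:
  assumes "\<And>i. i \<in> A \<Longrightarrow> \<not> f i j"
  shows "\<not> vsum f A j"
proof -
  from assms have "{i\<in>A. f i j} = {}"
    by auto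
  then show ?thesis
    by (simp only: vsum_def card.empty) simp
qed

lemma vsum_coord_cong: "(\<And>i. i \<in> A \<Longrightarrow> f i j = f i j') \<Longrightarrow> vsum f A j = vsum f A j'"
  unfolding vsum_def by (metis (mono_tags, lifting) Collect_cong)

lemma span_vecs_eq_image: "span_vecs k f = vsum f ` Pow {..<k}"
  by (auto simp: span_vecs_def)

lemma in_span_vecs: "i < k \<Longrightarrow> f i \<in> span_vecs k f"
  unfolding span_vecs_eq_image by (metis vsum_singleton Pow_iff empty_subsetI insert_subset lessThan_iff imageI)

lemma inj_on_vsum_if_lin_indep:
  assumes "lin_indep k f"
  shows "inj_on (vsum f) (Pow {..<k})"
proof
  fix A B assume A: "A \<in> Pow {..<k}" and B: "B \<in> Pow {..<k}" and eq: "vsum f A = vsum f B"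
  then have "finite A" "finite B"
    by (simp_all add: finite_subset)
  with eq have zero: "vsum f (sym_diff A B) = zvec"
    by (simp add: vsum_sym_diff vadd_eq_zvec_iff)
  have "sym_diff A B \<subseteq> {..<k}"
    using A B by auto
  from assms[unfolded lin_indep_def, rule_format, OF this zero]
  have "sym_diff A B = {}" .
  then show "A = B" by blast
qed

lemma card_span_vecs: "lin_indep k f \<Longrightarrow> card (span_vecs k f) = 2 ^ k"
  unfolding span_vecs_eq_image by (simp add: card_image inj_on_vsum_if_lin_indep card_Pow)

lemma span_vecs_agree_iff: "(\<forall>c\<in>span_vecs k f. c j = c j') \<longleftrightarrow> (\<forall>i<k. f i j = f i j')"
proof
  assume "\<forall>c\<in>span_vecs k f. c j = c j'"
  then show "\<forall>i<k. f i j = f i j'"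
    using in_span_vecs by blast
next
  assume "\<forall>i<k. f i j = f i j'"
  then have "vsum f A j = vsum f A j'" if "A \<subseteq> {..<k}" for A
    using that by (intro vsum_coord_cong) auto
  then show "\<forall>c\<in>span_vecs k f. c j = c j'"
    by (auto simp: span_vecs_eq_image)
qed

lemma span_vecs_vanish_iff: "(\<forall>c\<in>span_vecs k f. \<not> c j) \<longleftrightarrow> (\<forall>i<k. \<not> f i j)"
proof
  assume "\<forall>c\<in>span_vecs k f. \<not> c j"
  then show "\<forall>i<k. \<not> f i j"
    using in_span_vecs by blast
next
  assume "\<forall>i<k. \<not> f i j"
  then have "\<not> vsum f A j" if "A \<subseteq> {..<k}" for A
    using that by (intro not_vsum_if_none) auto
  then show "\<forall>c\<in>span_vecs k f. \<not> c j"
    by (auto simp: span_vecs_eq_image)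
qed

lemma vec_space_eq_image: "vec_space K = (\<lambda>S i. i \<in> S) ` Pow {..<K}"
proof
  show "vec_space K \<subseteq> (\<lambda>S i. i \<in> S) ` Pow {..<K}"
  proof
    fix v assume "v \<in> vec_space K"
    then have "supp v \<in> Pow {..<K}" and "v = (\<lambda>i. i \<in> supp v)"
      by (auto simp: vec_space_def supp_def not_le[symmetric])
    then show "v \<in> (\<lambda>S i. i \<in> S) ` Pow {..<K}"
      by blast
  qed
qed (auto simp: vec_space_def)

lemma finite_vec_space [simp]: "finite (vec_space K)"
  by (simp add: vec_space_eq_image)

lemma card_vec_space: "card (vec_space K) = 2 ^ K"
proof -
  have "inj_on (\<lambda>S i. i \<in> S) (Pow {..<K})"
    by (rule inj_onI) (simp add: fun_eq_iff set_eq_iff)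
  then show ?thesis
    by (simp add: vec_space_eq_image card_image card_Pow)
qed

lemma zvec_in_vec_space [simp]: "zvec \<in> vec_space K"
  by (simp add: vec_space_def zvec_def)

lemma card_vec_space_minus_zvec: "card (vec_space K - {zvec}) = 2 ^ K - 1"
  by (simp add: card_vec_space)

lemma vec_space_mono: "k \<le> K \<Longrightarrow> vec_space k \<subseteq> vec_space K"
  by (auto simp: vec_space_def)

lemma vsum_in_vec_space:
  assumes "\<And>i. i \<in> A \<Longrightarrow> f i \<in> vec_space N"
  shows "vsum f A \<in> vec_space N"
  unfolding vec_space_def
proof (intro CollectI allI impI)
  fix j assume "N \<le> j"
  with assms show "\<not> vsum f A j"
    by (intro not_vsum_if_none) (auto simp: vec_space_def)
qed

lemma lin_code_span_vecs:
  assumes "\<And>i. i < k \<Longrightarrow> f i \<in> vec_space N"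
  shows "lin_code N (span_vecs k f)"
  unfolding lin_code_def
proof (intro conjI ballI)
  show "span_vecs k f \<subseteq> vec_space N"
    using assms by (auto simp: span_vecs_eq_image intro!: vsum_in_vec_space)
  show "zvec \<in> span_vecs k f"
    by (metis span_vecs_eq_image vsum_empty Pow_bottom imageI)
  fix u v assume "u \<in> span_vecs k f" "v \<in> span_vecs k f"
  then obtain A B where "A \<subseteq> {..<k}" "B \<subseteq> {..<k}" "u = vsum f A" "v = vsum f B"
    by (auto simp: span_vecs_eq_image)
  moreover from this have "vadd u v = vsum f (sym_diff A B)"
    by (simp add: vsum_sym_diff finite_subset[of _ "{..<k}"])
  ultimately show "vadd u v \<in> span_vecs k f"
    by (auto simp: span_vecs_def)
qed

lemma finite_supp_if_in_vec_space: "v \<in> vec_space N \<Longrightarrow> finite (supp v)"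
  by (rule finite_subset[of _ "{..<N}"]) (auto simp: vec_space_def supp_def not_less[symmetric])

lemma wt_le_if_in_vec_space: "v \<in> vec_space N \<Longrightarrow> wt v \<le> N"
  unfolding wt_def
  by (rule card_mono[of "{..<N}", simplified]) (auto simp: vec_space_def supp_def not_less[symmetric])

lemma wt_zvec [simp]: "wt zvec = 0"
  by (simp add: wt_def supp_def zvec_def)

lemma wt_le_wmax: "finite C \<Longrightarrow> c \<in> C \<Longrightarrow> wt c \<le> wmax C"
  unfolding wmax_def by (rule Max_ge) auto

lemma wmin_le_wt: "finite C \<Longrightarrow> c \<in> C \<Longrightarrow> c \<noteq> zvec \<Longrightarrow> wmin C \<le> wt c"
  unfolding wmin_def by (rule Min_le) auto

lemma wmax_attained:
  assumes "finite C" "C \<noteq> {}"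
  shows "\<exists>c\<in>C. wt c = wmax C"
proof -
  have "wmax C \<in> wt ` C"
    unfolding wmax_def using assms by (intro Max_in) auto
  then show ?thesis
    by (metis imageE)
qed

lemma wmax_eqI:
  "finite C \<Longrightarrow> c \<in> C \<Longrightarrow> wt c = w \<Longrightarrow> (\<And>c. c \<in> C \<Longrightarrow> wt c \<le> w) \<Longrightarrow> wmax C = w"
  unfolding wmax_def by (rule Max_eqI) auto

lemma wmin_eqI:
  "finite C \<Longrightarrow> c \<in> C \<Longrightarrow> c \<noteq> zvec \<Longrightarrow> wt c = w \<Longrightarrow>
    (\<And>c. c \<in> C \<Longrightarrow> c \<noteq> zvec \<Longrightarrow> w \<le> wt c) \<Longrightarrow> wmin C = w"
  unfolding wmin_def by (rule Min_eqI) auto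

text \<open>Ashikhmin-Barg: if the supports of u and v are nested and u \<noteq> v, then u + v is a nonzero
  codeword of weight wt v - wt u \<le> wmax - wmin < wmin.\<close>

lemma minimal_code_if_wmax_less_double_wmin:
  assumes C: "lin_code N C" and AB: "wmax C < 2 * wmin C"
  shows "minimal_code C"
  unfolding minimal_code_def
proof (intro ballI impI)
  fix u v assume u: "u \<in> C - {zvec}" and v: "v \<in> C - {zvec}" and sub: "supp u \<subseteq> supp v"
  show "u = v"
  proof (rule ccontr)
    assume "u \<noteq> v"
    have "C \<subseteq> vec_space N" "finite C"
      using C finite_subset[OF _ finite_vec_space] by (auto simp: lin_code_def)
    have "wmin C \<le> wt (vadd u v)"
      using C u v \<open>u \<noteq> v\<close> \<open>finite C\<close> by (intro wmin_le_wt) (auto simp: lin_code_def vadd_eq_zvec_iff)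
    also have "supp (vadd u v) = supp v - supp u"
      using sub by (auto simp: supp_def vadd_def)
    then have "wt (vadd u v) = wt v - wt u"
      using sub u \<open>C \<subseteq> vec_space N\<close> finite_supp_if_in_vec_space
      by (auto simp: wt_def card_Diff_subset)
    also have "\<dots> \<le> wmax C - wmin C"
      using u v \<open>finite C\<close> wt_le_wmax[of C v] wmin_le_wt[of C u] by auto
    finally show False
      using AB by arith
  qed
qed

lemma not_ashikhmin_barg_if_wmax_eq_double_wmin: "wmax C = 2 * wmin C \<Longrightarrow> \<not> ashikhmin_barg C"
  by (simp add: ashikhmin_barg_def)

lemma mrow_in_vec_space: "mrow N G i \<in> vec_space N"
  by (simp add: mrow_def vec_space_def)

lemma mcol_in_vec_space: "mcol k G j \<in> vec_space k"
  by (simp add: mcol_def vec_space_def)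

definition dot_indicator :: "nat set \<Rightarrow> bvec \<Rightarrow> bool" where
  "dot_indicator A v \<longleftrightarrow> odd (card {i\<in>A. v i})"

lemma dot_indicator_zvec [simp]: "\<not> dot_indicator A zvec"
  by (simp add: dot_indicator_def zvec_def)

lemma dot_indicator_mcol_Int: "dot_indicator (A \<inter> {..<k}) (mcol k G j) = dot_indicator A (mcol k G j)"
proof -
  have "{i\<in>A \<inter> {..<k}. mcol k G j i} = {i\<in>A. mcol k G j i}"
    by (auto simp: mcol_def)
  then show ?thesis by (simp add: dot_indicator_def)
qed

lemma vsum_mrow:
  assumes "A \<subseteq> {..<k}"
  shows "vsum (mrow N G) A j \<longleftrightarrow> j < N \<and> dot_indicator A (mcol k G j)"
proof -
  have "{i\<in>A. mrow N G i j} = (if j < N then {i\<in>A. mcol k G j i} else {})"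
    using assms by (auto simp: mrow_def mcol_def)
  then show ?thesis by (simp add: vsum_def dot_indicator_def)
qed

lemma wt_vsum_mrow:
  assumes "A \<subseteq> {..<k}"
  shows "wt (vsum (mrow N G) A) = card {j\<in>{..<N}. dot_indicator A (mcol k G j)}"
proof -
  have "supp (vsum (mrow N G) A) = {j\<in>{..<N}. dot_indicator A (mcol k G j)}"
    using vsum_mrow[OF assms] by (auto simp: supp_def)
  then show ?thesis by (simp add: wt_def)
qed

lemma mcol_eq_iff_codewords_agree:
  assumes "is_gen_matrix k N G C" "j < N" "j' < N"
  shows "mcol k G j = mcol k G j' \<longleftrightarrow> (\<forall>c\<in>C. c j = c j')"
proof -
  have "mcol k G j = mcol k G j' \<longleftrightarrow> (\<forall>i<k. mrow N G i j = mrow N G i j')"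
    using assms(2,3) by (auto simp: mcol_def mrow_def fun_eq_iff)
  moreover from assms(1) have "C = span_vecs k (mrow N G)"
    by (simp add: is_gen_matrix_def code_of_def)
  ultimately show ?thesis
    by (simp add: span_vecs_agree_iff)
qed

lemma mcol_eq_zvec_iff_codewords_vanish:
  assumes "is_gen_matrix k N G C" "j < N"
  shows "mcol k G j = zvec \<longleftrightarrow> (\<forall>c\<in>C. \<not> c j)"
proof -
  have "mcol k G j = zvec \<longleftrightarrow> (\<forall>i<k. \<not> mrow N G i j)"
    using assms(2) by (auto simp: mcol_def mrow_def zvec_def fun_eq_iff)
  moreover from assms(1) have "C = span_vecs k (mrow N G)"
    by (simp add: is_gen_matrix_def code_of_def)
  ultimately show ?thesis
    by (simp add: span_vecs_vanish_iff)
qed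

text \<open>Coincidences among the columns of a generator matrix are read off from the codewords,
  so projectivity holds for every generator matrix, not just for the one in its definition.\<close>

lemma projective_gen_matrix_cols:
  assumes "projective N k C" "is_gen_matrix k N G C"
  shows "\<forall>j<N. mcol k G j \<noteq> zvec" "inj_on (mcol k G) {..<N}"
proof -
  obtain G' where G': "is_gen_matrix k N G' C" "\<forall>j<N. mcol k G' j \<noteq> zvec"
    "inj_on (mcol k G') {..<N}"
    using assms(1) unfolding projective_def by blast
  show "\<forall>j<N. mcol k G j \<noteq> zvec"
    using G'(1,2) assms(2) by (simp add: mcol_eq_zvec_iff_codewords_vanish)
  show "inj_on (mcol k G) {..<N}"
    using G'(1,3) assms(2) by (simp add: inj_on_def mcol_eq_iff_codewords_agree)
qed

lemma mcol_image_subset: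
  assumes "\<forall>j<n. mcol k G j \<noteq> zvec" "k \<le> K"
  shows "mcol k G ` {..<n} \<subseteq> vec_space K - {zvec}"
  using assms mcol_in_vec_space[of k G] vec_space_mono[of k K] by auto

lemma length_lt_if_cols_distinct_nonzero:
  assumes "inj_on (mcol k G) {..<n}" "\<forall>j<n. mcol k G j \<noteq> zvec"
  shows "n < 2 ^ k"
proof -
  have "n \<le> card (vec_space k - {zvec})"
    using card_inj_on_le[OF assms(1) mcol_image_subset[OF assms(2) order_refl]] by simp
  moreover have "(0::nat) < 2 ^ k"
    by simp
  ultimately show ?thesis
    unfolding card_vec_space_minus_zvec by arith
qed

section \<open>The simplex complementary code\<close>

lemma dot_indicator_flip:
  assumes "a \<in> A" "finite A"
  shows "dot_indicator A (v(a := \<not> v a)) \<longleftrightarrow> \<not> dot_indicator A v"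
proof -
  have "{i\<in>A. (v(a := \<not> v a)) i} = sym_diff {i\<in>A. v i} {a}"
    using assms by auto
  then show ?thesis
    using assms by (simp add: dot_indicator_def odd_card_sym_diff)
qed

text \<open>Flipping a coordinate in A exchanges the vectors with odd and with even inner product
  with A.\<close>

lemma card_dot_indicator:
  assumes "A \<subseteq> {..<K}" "A \<noteq> {}"
  shows "card {v\<in>vec_space K. dot_indicator A v} = 2 ^ (K - 1)"
proof -
  obtain a where a: "a \<in> A"
    using assms(2) by blast
  have "a < K" "finite A"
    using assms(1) a by (auto simp: finite_subset)
  define flip where "flip v = v(a := \<not> v a)" for v :: bvec
  let ?E = "{v\<in>vec_space K. dot_indicator A v}"
  let ?O = "{v\<in>vec_space K. \<not> dot_indicator A v}"
  have flip_flip: "flip (flip v) = v" for v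
    by (simp add: flip_def)
  have flip_in: "flip v \<in> vec_space K \<longleftrightarrow> v \<in> vec_space K" for v
    using \<open>a < K\<close> by (auto simp: flip_def vec_space_def)
  have dot_flip: "dot_indicator A (flip v) \<longleftrightarrow> \<not> dot_indicator A v" for v
    unfolding flip_def using a \<open>finite A\<close> by (rule dot_indicator_flip)
  have "bij_betw flip ?E ?O"
    by (rule bij_betw_byWitness[where f' = flip]) (auto simp: flip_flip flip_in dot_flip)
  then have "card ?E = card ?O"
    by (rule bij_betw_same_card)
  also have "?O = vec_space K - ?E"
    by blast
  also have "card (vec_space K - ?E) = 2 ^ K - card ?E"
    by (simp add: card_Diff_subset card_vec_space)
  finally have "2 * card ?E = 2 ^ K"
    using zero_less_power[of 2 K] by arith
  moreover have "(2::nat) ^ K = 2 * 2 ^ (K - 1)"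
    using \<open>a < K\<close> by (cases K) auto
  ultimately show ?thesis
    by simp
qed

lemma card_Collect_image:
  assumes "inj_on g I"
  shows "card {v\<in>g ` I. P v} = card {j\<in>I. P (g j)}"
proof -
  have "{v\<in>g ` I. P v} = g ` {j\<in>I. P (g j)}"
    by auto
  then show ?thesis
    using assms by (simp add: card_image inj_on_subset)
qed

lemma simplex_compl_length:
  assumes "simplex_compl_matrix k n G h n1 H"
    and "inj_on (mcol k G) {..<n}" "\<forall>j<n. mcol k G j \<noteq> zvec"
  shows "n1 = 2 ^ (k + h) - 1 - n"
proof -
  have "n1 = card (vec_space (k + h) - {zvec} - mcol k G ` {..<n})"
    using assms(1) by (simp add: simplex_compl_matrix_def flip: bij_betw_same_card)
  also have "\<dots> = 2 ^ (k + h) - 1 - n"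
    using assms(2) mcol_image_subset[OF assms(3), of "k + h"]
    by (simp add: card_Diff_subset card_image card_vec_space_minus_zvec)
  finally show ?thesis .
qed

lemma wt_simplex_compl:
  assumes H: "simplex_compl_matrix k n G h n1 H" and inj: "inj_on (mcol k G) {..<n}"
    and A: "A \<subseteq> {..<k + h}" "A \<noteq> {}"
  shows "wt (vsum (mrow n1 H) A) = 2 ^ (k + h - 1) - wt (vsum (mrow n G) (A \<inter> {..<k}))"
proof -
  let ?dot = "dot_indicator A" and ?V = "vec_space (k + h)" and ?S = "mcol k G ` {..<n}"
  have bij: "bij_betw (mcol (k + h) H) {..<n1} (?V - {zvec} - ?S)"
    using H by (simp add: simplex_compl_matrix_def)
  have "{v\<in>?S. ?dot v} \<subseteq> {v\<in>?V. ?dot v}"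
    using mcol_in_vec_space vec_space_mono[of k "k + h"] by auto
  moreover have "{v\<in>?V - {zvec} - ?S. ?dot v} = {v\<in>?V. ?dot v} - {v\<in>?S. ?dot v}"
    by auto
  ultimately have split: "card {v\<in>?V - {zvec} - ?S. ?dot v} = card {v\<in>?V. ?dot v} - card {v\<in>?S. ?dot v}"
    by (simp add: card_Diff_subset finite_subset)
  have "wt (vsum (mrow n1 H) A) = card {j\<in>{..<n1}. ?dot (mcol (k + h) H j)}"
    using A(1) by (rule wt_vsum_mrow)
  also have "\<dots> = card {v\<in>?V - {zvec} - ?S. ?dot v}"
    using bij card_Collect_image[of "mcol (k + h) H" "{..<n1}" ?dot] by (simp add: bij_betw_def)
  also have "\<dots> = 2 ^ (k + h - 1) - card {j\<in>{..<n}. ?dot (mcol k G j)}"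
    using split card_dot_indicator[OF A] card_Collect_image[OF inj] by simp
  also have "\<dots> = 2 ^ (k + h - 1) - wt (vsum (mrow n G) (A \<inter> {..<k}))"
    by (simp add: wt_vsum_mrow[of "A \<inter> {..<k}" k] dot_indicator_mcol_Int)
  finally show ?thesis .
qed

lemma simplex_compl_code:
  assumes G: "is_gen_matrix k n G C0" and proj: "projective n k C0"
    and H: "simplex_compl_matrix k n G h n1 H" and "0 < h"
  shows "is_code (2 ^ (k + h) - 1 - n) (k + h) (2 ^ (k + h - 1) - wmax C0) (code_of (k + h) n1 H)"
    and "wmax (code_of (k + h) n1 H) = 2 ^ (k + h - 1)"
proof -
  let ?K = "k + h" and ?cG = "vsum (mrow n G)" and ?cH = "vsum (mrow n1 H)"
  let ?C = "code_of ?K n1 H"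
  note cols = projective_gen_matrix_cols[OF proj G]
  have C0: "C0 = ?cG ` Pow {..<k}"
    using G by (simp add: is_gen_matrix_def code_of_def span_vecs_eq_image)
  have C: "?C = ?cH ` Pow {..<?K}"
    by (simp add: code_of_def span_vecs_eq_image)
  have wt_cH: "wt (?cH A) = 2 ^ (?K - 1) - wt (?cG (A \<inter> {..<k}))" if "A \<subseteq> {..<?K}" "A \<noteq> {}" for A
    using H cols(2) that by (rule wt_simplex_compl)
  have wt_cG_le: "wt (?cG B) \<le> wmax C0" if "B \<subseteq> {..<k}" for B
    using that by (simp add: C0 wt_le_wmax)
  have wt_cG_lt: "wt (?cG B) < 2 ^ (?K - 1)" for B
  proof -
    have "wt (?cG B) \<le> n"
      by (intro wt_le_if_in_vec_space vsum_in_vec_space mrow_in_vec_space)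
    also have "n < 2 ^ k"
      using cols by (intro length_lt_if_cols_distinct_nonzero)
    also have "\<dots> \<le> 2 ^ (?K - 1)"
      using \<open>0 < h\<close> by simp
    finally show ?thesis .
  qed
  have nonzero: "?cH A \<noteq> zvec" if "A \<subseteq> {..<?K}" "A \<noteq> {}" for A
    using wt_cH[OF that] wt_cG_lt[of "A \<inter> {..<k}"] by (metis wt_zvec zero_less_diff less_irrefl)
  have indep: "lin_indep ?K (mrow n1 H)"
    using nonzero by (auto simp: lin_indep_def)
  have "wmax ?C = 2 ^ (?K - 1)"
  proof (rule wmax_eqI)
    show "?cH {k} \<in> ?C"
      using \<open>0 < h\<close> by (simp add: code_of_def in_span_vecs)
    show "wt (?cH {k}) = 2 ^ (?K - 1)"
      using \<open>0 < h\<close> wt_cH[of "{k}"] by simp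
    show "wt c \<le> 2 ^ (?K - 1)" if "c \<in> ?C" for c
    proof -
      obtain A where "A \<subseteq> {..<?K}" "c = ?cH A"
        using \<open>c \<in> ?C\<close> by (auto simp: C)
      then show ?thesis
        using wt_cH[of A] by (cases "A = {}") auto
    qed
  qed (simp add: C)
  moreover have "wmin ?C = 2 ^ (?K - 1) - wmax C0"
  proof -
    obtain A0 where A0: "A0 \<subseteq> {..<k}" "wt (?cG A0) = wmax C0"
      using wmax_attained[of C0] by (auto simp: C0)
    have A: "insert k A0 \<subseteq> {..<?K}" "insert k A0 \<inter> {..<k} = A0"
      using A0(1) \<open>0 < h\<close> by auto
    show ?thesis
    proof (rule wmin_eqI)
      show "?cH (insert k A0) \<in> ?C" "?cH (insert k A0) \<noteq> zvec"
        using A(1) nonzero by (auto simp: C)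
      show "wt (?cH (insert k A0)) = 2 ^ (?K - 1) - wmax C0"
        using wt_cH[OF A(1)] A(2) A0(2) by simp
      show "2 ^ (?K - 1) - wmax C0 \<le> wt c" if "c \<in> ?C" "c \<noteq> zvec" for c
      proof -
        obtain A where "A \<subseteq> {..<?K}" "c = ?cH A"
          using \<open>c \<in> ?C\<close> by (auto simp: C)
        moreover from this have "A \<noteq> {}"
          using \<open>c \<noteq> zvec\<close> by auto
        ultimately show ?thesis
          using wt_cH[of A] wt_cG_le[of "A \<inter> {..<k}"] by simp
      qed
    qed (simp add: C)
  qed
  moreover have "lin_code n1 ?C"
    unfolding code_of_def by (intro lin_code_span_vecs mrow_in_vec_space)
  moreover have "card ?C = 2 ^ ?K"
    unfolding code_of_def using indep by (rule card_span_vecs)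
  ultimately show "is_code (2 ^ ?K - 1 - n) ?K (2 ^ (?K - 1) - wmax C0) ?C" "wmax ?C = 2 ^ (?K - 1)"
    using simplex_compl_length[OF H cols(2,1)] by (simp_all add: is_code_def)
qed

section \<open>The extension construction\<close>

definition prepend :: "nat \<Rightarrow> bool \<Rightarrow> bvec \<Rightarrow> bvec" where
  "prepend N' b c = (\<lambda>j. if j < N' then b else c (j - N'))"

lemma prepend_shift [simp]: "prepend N' b c (t + N') = c t"
  by (simp add: prepend_def)

lemma prepend_eq_zvecD:
  assumes "prepend N' b c = zvec"
  shows "c = zvec"
proof
  fix t
  have "c t = prepend N' b c (t + N')"
    by simp
  with assms show "c t = zvec t"
    by (simp add: zvec_def)
qed

lemma prepend_False_zvec [simp]: "prepend N' False zvec = zvec"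
  by (simp add: prepend_def zvec_def fun_eq_iff)

lemma prepend_in_vec_space: "c \<in> vec_space N \<Longrightarrow> prepend N' b c \<in> vec_space (N' + N)"
  by (simp add: prepend_def vec_space_def)

lemma supp_prepend_subsetD:
  assumes "supp (prepend N' b c) \<subseteq> supp (prepend N' b' d)"
  shows "supp c \<subseteq> supp d"
proof
  fix t assume "t \<in> supp c"
  then have "t + N' \<in> supp (prepend N' b c)"
    by (simp add: supp_def)
  with assms have "t + N' \<in> supp (prepend N' b' d)"
    by blast
  then show "t \<in> supp d"
    by (simp add: supp_def)
qed

lemma wt_prepend:
  assumes "finite (supp c)"
  shows "wt (prepend N' b c) = (if b then N' else 0) + wt c"
proof -
  have "supp (prepend N' b c) = (if b then {..<N'} else {}) \<union> (\<lambda>t. t + N') ` supp c"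
    by (auto simp: prepend_def supp_def image_iff) (metis le_add_diff_inverse2 not_less)+
  moreover have "(if b then {..<N'} else {}) \<inter> (\<lambda>t. t + N') ` supp c = {}"
    by auto
  ultimately show ?thesis
    using assms by (simp add: wt_def card_Un_disjoint card_image)
qed

lemma vsum_prepend: "vsum (\<lambda>i. prepend N' (i = 0) (f i)) A = prepend N' (0 \<in> A) (vsum f A)"
proof
  fix j
  have "{i\<in>A. i = 0} = (if 0 \<in> A then {0} else {})"
    by auto
  then show "vsum (\<lambda>i. prepend N' (i = 0) (f i)) A j = prepend N' (0 \<in> A) (vsum f A) j"
    by (simp add: vsum_def prepend_def)
qed

lemma extension_code_eq_span: "extension_code D K r = span_vecs K (\<lambda>i. prepend (ext_len D) (i = 0) (r i))"
  by (simp add: extension_code_def prepend_def)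

lemma extension_code_eq_image:
  "extension_code D K r = (\<lambda>A. prepend (ext_len D) (0 \<in> A) (vsum r A)) ` Pow {..<K}"
  by (simp add: extension_code_eq_span span_vecs_eq_image vsum_prepend)

lemma vsum_basis_in: "is_basis K r D \<Longrightarrow> A \<subseteq> {..<K} \<Longrightarrow> vsum r A \<in> D"
  by (auto simp: is_basis_def span_vecs_eq_image)

lemma vsum_basis_eq_zvec_iff: "is_basis K r D \<Longrightarrow> A \<subseteq> {..<K} \<Longrightarrow> vsum r A = zvec \<longleftrightarrow> A = {}"
  by (auto simp: is_basis_def lin_indep_def)

lemma lin_indep_extension_rows:
  assumes "is_basis K r D"
  shows "lin_indep K (\<lambda>i. prepend N' (i = 0) (r i))"
  using assms by (auto simp: lin_indep_def vsum_prepend vsum_basis_eq_zvec_iff dest: prepend_eq_zvecD)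

lemma extension_code_params:
  assumes D: "lin_code N D" and basis: "is_basis K r D" and "2 \<le> K"
    and r0: "wt (r 0) = wmax D" and r1: "wt (r 1) = wmin D"
  shows "is_code (N + ext_len D) K (wmin D) (extension_code D K r)"
    and "wmax (extension_code D K r) = ext_len D + wmax D"
proof -
  let ?N' = "ext_len D" and ?C = "extension_code D K r"
  let ?c = "\<lambda>A. prepend ?N' (0 \<in> A) (vsum r A)"
  have "D \<subseteq> vec_space N" "finite D"
    using D finite_subset[OF _ finite_vec_space] by (auto simp: lin_code_def)
  have wt_c: "wt (?c A) = (if 0 \<in> A then ?N' else 0) + wt (vsum r A)" if "A \<subseteq> {..<K}" for A
    using vsum_basis_in[OF basis that] \<open>D \<subseteq> vec_space N\<close>
    by (intro wt_prepend finite_supp_if_in_vec_space) auto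
  have "wmin ?C = wmin D"
  proof (rule wmin_eqI)
    show "?c {1} \<in> ?C"
      using \<open>2 \<le> K\<close> unfolding extension_code_eq_image by (intro imageI) simp
    show "wt (?c {1}) = wmin D"
      using \<open>2 \<le> K\<close> wt_c[of "{1}"] r1 by simp
    show "?c {1} \<noteq> zvec"
      using \<open>2 \<le> K\<close> vsum_basis_eq_zvec_iff[OF basis, of "{1}"] by (auto dest: prepend_eq_zvecD)
    show "wmin D \<le> wt c" if "c \<in> ?C" "c \<noteq> zvec" for c
    proof -
      obtain A where A: "A \<subseteq> {..<K}" "c = ?c A"
        using \<open>c \<in> ?C\<close> by (auto simp: extension_code_eq_image)
      with \<open>c \<noteq> zvec\<close> have "vsum r A \<noteq> zvec"
        using vsum_basis_eq_zvec_iff[OF basis A(1)] by auto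
      then have "wmin D \<le> wt (vsum r A)"
        using \<open>finite D\<close> vsum_basis_in[OF basis A(1)] by (rule wmin_le_wt[rotated 2])
      then show ?thesis
        using A wt_c by simp
    qed
  qed (simp add: extension_code_eq_image)
  moreover have "wmax ?C = ?N' + wmax D"
  proof (rule wmax_eqI)
    show "?c {0} \<in> ?C"
      using \<open>2 \<le> K\<close> unfolding extension_code_eq_image by (intro imageI) simp
    show "wt (?c {0}) = ?N' + wmax D"
      using \<open>2 \<le> K\<close> wt_c[of "{0}"] r0 by simp
    show "wt c \<le> ?N' + wmax D" if "c \<in> ?C" for c
    proof -
      obtain A where A: "A \<subseteq> {..<K}" "c = ?c A"
        using \<open>c \<in> ?C\<close> by (auto simp: extension_code_eq_image)
      then show ?thesis
        using wt_c[OF A(1)] wt_le_wmax[OF \<open>finite D\<close> vsum_basis_in[OF basis A(1)]] by simp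
    qed
  qed (simp add: extension_code_eq_image)
  moreover have "lin_code (?N' + N) ?C"
    unfolding extension_code_eq_span
    using vsum_basis_in[OF basis, of "{_}"] \<open>D \<subseteq> vec_space N\<close>
    by (intro lin_code_span_vecs prepend_in_vec_space) auto
  moreover have "card ?C = 2 ^ K"
    unfolding extension_code_eq_span using basis by (intro card_span_vecs lin_indep_extension_rows)
  ultimately show "is_code (N + ?N') K (wmin D) ?C" "wmax ?C = ?N' + wmax D"
    by (simp_all add: is_code_def add.commute)
qed

text \<open>Nested supports in the extension code give nested supports of the tails in D, which is
  minimal; the tails determine the messages since the basis is independent.\<close>

lemma minimal_extension_code:
  assumes D: "lin_code N D" and basis: "is_basis K r D" and AB: "wmax D < 2 * wmin D"
  shows "minimal_code (extension_code D K r)"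
  unfolding minimal_code_def
proof (intro ballI impI)
  let ?c = "\<lambda>A. prepend (ext_len D) (0 \<in> A) (vsum r A)"
  fix u v assume u: "u \<in> extension_code D K r - {zvec}" and v: "v \<in> extension_code D K r - {zvec}"
    and sub: "supp u \<subseteq> supp v"
  obtain A B where A: "A \<subseteq> {..<K}" "u = ?c A" and B: "B \<subseteq> {..<K}" "v = ?c B"
    using u v by (auto simp: extension_code_eq_image)
  have "A \<noteq> {}" "B \<noteq> {}"
    using u v A B by auto
  then have "vsum r A \<in> D - {zvec}" "vsum r B \<in> D - {zvec}"
    using A(1) B(1) vsum_basis_in[OF basis] vsum_basis_eq_zvec_iff[OF basis] by auto
  moreover have "supp (vsum r A) \<subseteq> supp (vsum r B)"
    using sub unfolding A(2) B(2) by (rule supp_prepend_subsetD)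
  ultimately have "vsum r A = vsum r B"
    using minimal_code_if_wmax_less_double_wmin[OF D AB] by (auto simp: minimal_code_def)
  moreover have "inj_on (vsum r) (Pow {..<K})"
    using basis by (simp add: is_basis_def inj_on_vsum_if_lin_indep)
  ultimately have "A = B"
    using A(1) B(1) by (simp add: inj_on_eq_iff)
  then show "u = v"
    using A(2) B(2) by simp
qed

lemma extension_of_simplex_compl:
  fixes k n h n1 :: nat and G H :: "nat \<Rightarrow> nat \<Rightarrow> bool" and C0 :: "bvec set"
    and r :: "nat \<Rightarrow> bvec"
  defines "C1 \<equiv> code_of (k + h) n1 H" and "C' \<equiv> extension_code (code_of (k + h) n1 H) (k + h) r"
  assumes G: "is_gen_matrix k n G C0" and proj: "projective n k C0"
    and H: "simplex_compl_matrix k n G h n1 H" and "0 < k" "0 < h"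
    and basis: "is_basis (k + h) r C1" and r0: "wt (r 0) = wmax C1" and r1: "wt (r 1) = wmin C1"
    and small: "2 * wmax C0 < 2 ^ (k + h - 1)"
  shows "is_code (2 ^ (k + h) - 1 - n) (k + h) (2 ^ (k + h - 1) - wmax C0) C1"
    and "wmax C1 = 2 ^ (k + h - 1)"
    and "ext_len C1 = 2 ^ (k + h - 1) - 2 * wmax C0"
    and "is_code (2 ^ (k + h) - 1 - n + ext_len C1) (k + h) (2 ^ (k + h - 1) - wmax C0) C'"
    and "wmax C' = 2 * (2 ^ (k + h - 1) - wmax C0)"
    and "minimal_code C'"
    and "\<not> ashikhmin_barg C'"
proof -
  note C1 = simplex_compl_code[OF G proj H \<open>0 < h\<close>, folded C1_def]
  then have lin: "lin_code (2 ^ (k + h) - 1 - n) C1" and wmin: "wmin C1 = 2 ^ (k + h - 1) - wmax C0"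
    by (simp_all add: is_code_def)
  have "2 \<le> k + h"
    using \<open>0 < k\<close> \<open>0 < h\<close> by simp
  have C'_eq: "extension_code C1 (k + h) r = C'"
    by (simp add: C'_def C1_def)
  note C' = extension_code_params[OF lin basis \<open>2 \<le> k + h\<close> r0 r1, unfolded C'_eq]
  show "ext_len C1 = 2 ^ (k + h - 1) - 2 * wmax C0"
    using C1(2) wmin by (simp add: ext_len_def)
  with C'(2) C1(2) small show "wmax C' = 2 * (2 ^ (k + h - 1) - wmax C0)"
    by (simp add: diff_mult_distrib2 mult_2)
  with C'(1) wmin show "\<not> ashikhmin_barg C'"
    by (intro not_ashikhmin_barg_if_wmax_eq_double_wmin) (simp add: is_code_def)
  show "minimal_code C'"
    unfolding C'_eq[symmetric]
    using C1(2) wmin small by (intro minimal_extension_code[OF lin basis]) simp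
  show "is_code (2 ^ (k + h) - 1 - n) (k + h) (2 ^ (k + h - 1) - wmax C0) C1"
    "wmax C1 = 2 ^ (k + h - 1)"
    "is_code (2 ^ (k + h) - 1 - n + ext_len C1) (k + h) (2 ^ (k + h - 1) - wmax C0) C'"
    using C1 C'(1) wmin by simp_all
qed

theorem proposition4p5:
  fixes m h n1 :: nat and C0 :: "bvec set" and G H :: "nat \<Rightarrow> nat \<Rightarrow> bool"
    and r :: "nat \<Rightarrow> bvec"
  assumes "odd m" and "m \<ge> 5" and "h \<ge> 1"
    and "projective (2^(m-2)) (m-1) C0"
    and "is_code (2^(m-2)) (m-1) (2^(m-3) - 2^((m-3) div 2)) C0"
    and "wmax C0 = 2^(m-3) + 2^((m-3) div 2)"
    and "is_gen_matrix (m-1) (2^(m-2)) G C0"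
    and "simplex_compl_matrix (m-1) (2^(m-2)) G h n1 H"
    and "is_basis (m+h-1) r (code_of (m+h-1) n1 H)"
    and "wt (r 0) = wmax (code_of (m+h-1) n1 H)"
    and "wt (r 1) = wmin (code_of (m+h-1) n1 H)"
  shows "let C1 = code_of (m+h-1) n1 H;
             n' = 2^(m+h-2) - 2^(m-2) - 2^((m-1) div 2);
             C' = extension_code C1 (m+h-1) r
         in is_code (2^(m+h-1) - 2^(m-2) - 1) (m+h-1) (2^(m+h-2) - 2^(m-3) - 2^((m-3) div 2)) C1
          \<and> wmax C1 = 2^(m+h-2)
          \<and> ext_len C1 = n'
          \<and> is_code (2^(m+h-1) - 2^(m-2) - 1 + n') (m+h-1) (2^(m+h-2) - 2^(m-3) - 2^((m-3) div 2)) C'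
          \<and> wmax C' = 2^(m+h-1) - 2^(m-2) - 2^((m-1) div 2)
          \<and> wmax C' = 2^(m+h-2) + n'
          \<and> minimal_code C'
          \<and> \<not> ashikhmin_barg C'"
proof -
  \<comment> \<open>Only the maximum weight of C0 matters; odd m and the minimum distance of C0 are needed
    only for such a code C0 to exist.\<close>
  define P a b :: nat where "P = 2 ^ (m + h - 2)" and "a = 2 ^ (m - 3)" and "b = 2 ^ ((m - 3) div 2)"
  have "m + h - 1 = Suc (m + h - 2)" "m - 1 = Suc (Suc (m - 3))" "m - 2 = Suc (m - 3)"
    "(m - 1) div 2 = Suc ((m - 3) div 2)"
    using \<open>m \<ge> 5\<close> by auto
  then have pow: "2 ^ (m + h - 1) = 2 * P" "2 ^ (m - 2) = 2 * a" "2 ^ ((m - 1) div 2) = 2 * b"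
    and "2 ^ (m - 1) = 4 * a"
    by (simp_all add: P_def a_def b_def)
  have "b < a"
    unfolding a_def b_def using \<open>m \<ge> 5\<close> by (intro power_strict_increasing) auto
  moreover have "4 * a \<le> P"
    unfolding \<open>2 ^ (m - 1) = 4 * a\<close>[symmetric] P_def using \<open>h \<ge> 1\<close> by (intro power_increasing) auto
  ultimately have small: "2 * (a + b) < P"
    unfolding distrib_left by linarith
  have K: "m - 1 + h = m + h - 1" "m + h - 1 - 1 = m + h - 2" and "0 < m - 1" "0 < h"
    using \<open>m \<ge> 5\<close> \<open>h \<ge> 1\<close> by auto
  note ext = extension_of_simplex_compl[where k = "m - 1" and n = "2 ^ (m - 2)" and h = h, unfolded K]
  from ext[OF assms(7,4,8) \<open>0 < m - 1\<close> \<open>0 < h\<close> assms(9-11), unfolded pow assms(6),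
    folded P_def a_def b_def] small
  show ?thesis
    unfolding Let_def pow P_def[symmetric] a_def[symmetric] b_def[symmetric]
    by (simp add: diff_diff_left add.commute) arith
qed

end
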